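(* For every integer $k\ge1$, \begin{align*} \sum_{n=1}^\infty\frac{H_n^{(k)}}{n^3}&=\zeta(k+3)+\zeta(3,k),\\ \sum_{n=1}^\infty\frac{P_k(H_n,\dots,H_n^{(k)})}{n^3}&=\zeta(k+2,1)+\zeta(k+1,1,1),\\ \sum_{n=1}^\infty\frac{Q_k(H_n,\dots,H_n^{(k)})}{n^3}&=\zeta(k+3)+\sum_{j=2}^{k+1}S^T_{k+3,j}. \end{align*}
   Context: $H_n^{(r)}=\sum_{t=1}^n t^{-r}$, $H_n=H_n^{(1)}$. For $n\ge1$, $P_n(y_1,\dots,y_n)=\sum_{m_1+2m_2+\cdots=n}\frac{(-1)^{m_2+m_4+\cdots}}{m_1!m_2!\cdots}\prod_{i\ge1}(y_i/i)^{m_i}$ and $Q_n(y_1,\dots,y_n)=\sum_{m_1+2m_2+\cdots=n}\frac{1}{m_1!m_2!\cdots}\prod_{i\ge1}(y_i/i)^{m_i}$. Multiple zeta values: $\zeta(a_1,\dots,a_k)=\sum_{n_1>\cdots>n_k\ge1}n_1^{-a_1}\cdots n_k^{-a_k}$ ($a_r\ge1$, $a_1\ge2$), of weight $a_1+\cdots+a_k$ and depth $k$. $S^T_{N,d}$ is the sum of all multiple zeta values $\zeta(a_1,\dots,a_d)$ of weight $N$ and depth $d$ with $a_1\ge3$. *)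

theory Defs
  imports "HOL-Analysis.Analysis"
begin

definition harm :: "nat \<Rightarrow> nat \<Rightarrow> real" where
  "harm r n = (\<Sum>t=1..n. 1 / real t ^ r)"

definition mzv :: "nat list \<Rightarrow> real" where
  "mzv as = (\<Sum>\<^sub>\<infinity> ns \<in> {ns. length ns = length as \<and> sorted_wrt (>) ns \<and> (\<forall>n\<in>set ns. 1 \<le> n)}.
              \<Prod>i<length as. 1 / real (ns ! i) ^ (as ! i))"

definition partvecs :: "nat \<Rightarrow> (nat \<Rightarrow> nat) set" where
  "partvecs n = {m. (\<forall>i. m i \<noteq> 0 \<longrightarrow> i \<in> {1..n}) \<and> (\<Sum>i=1..n. i * m i) = n}"

definition polyP :: "nat \<Rightarrow> (nat \<Rightarrow> real) \<Rightarrow> real" where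
  "polyP n y = (\<Sum>m\<in>partvecs n.
      (-1) ^ (\<Sum>i\<in>{i\<in>{1..n}. even i}. m i) / (\<Prod>i=1..n. fact (m i))
      * (\<Prod>i=1..n. (y i / real i) ^ m i))"

definition polyQ :: "nat \<Rightarrow> (nat \<Rightarrow> real) \<Rightarrow> real" where
  "polyQ n y = (\<Sum>m\<in>partvecs n.
      1 / (\<Prod>i=1..n. fact (m i)) * (\<Prod>i=1..n. (y i / real i) ^ m i))"

definition ST :: "nat \<Rightarrow> nat \<Rightarrow> real" where
  "ST N d = (\<Sum>as\<in>{as. length as = d \<and> sum_list as = N \<and> (\<forall>a\<in>set as. 1 \<le> a) \<and> 3 \<le> hd as}. mzv as)"

end

theory Submission
  imports Defs
begin

text \<open>All three partial sums are finite sums of truncated multiple zeta values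
  $\zeta_N(a_1,\dots,a_d) = \sum_{N \ge n_1 > \dots > n_d \ge 1} \prod n_i^{-a_i}$.
  Both $P_k$ and $Q_k$ satisfy the Newton recurrence $k f_k = \sum_i y_i f_{k-i}$ (with signs
  for $P_k$), so at $y_i = H_n^{(i)}$ they are the elementary and the complete homogeneous
  symmetric functions of $1, 1/2, \dots, 1/n$, i.e.\ $\zeta_n(\{1\}^k)$ and
  $\zeta^\star_n(\{1\}^k)$. Splitting off the terms with index $n$, the partial sums become
  $\zeta_N(k+3) + \zeta_N(3,k)$, $\zeta_N(3,\{1\}^k) + \zeta_N(4,\{1\}^{k-1})$, and the sum of
  $\zeta_N(\mathbf{a})$ over compositions $\mathbf{a}$ of $k+3$ with first part at least 3.

  Convergence and duality both come from the connected sums of Seki and Yamamoto, taken in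
  \<open>ennreal\<close> so that every rearrangement is free: moving exponents 1 across the
  connected sum proves $\zeta(a+2,\{1\}^k) = \zeta(k+2,\{1\}^a)$, and the case $a = 0$
  bounds every admissible $\zeta$ by a single zeta value.\<close>

section \<open>Truncated multiple zeta values\<close>

fun mzv_trunc :: "nat \<Rightarrow> nat list \<Rightarrow> real" where
  "mzv_trunc N [] = 1"
| "mzv_trunc N (a # as) = (\<Sum>n=1..N. 1 / real n ^ a * mzv_trunc (n - 1) as)"

definition mzv_term :: "nat list \<Rightarrow> nat \<Rightarrow> real" where
  "mzv_term as n = (case as of
      [] \<Rightarrow> (if n = 0 then 1 else 0)
    | a # r \<Rightarrow> (if n = 0 then 0 else 1 / real n ^ a * mzv_trunc (n - 1) r))"

lemma mzv_term_Nil: "mzv_term [] n = (if n = 0 then 1 else 0)"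
  by (simp add: mzv_term_def)

lemma mzv_term_Cons: "mzv_term (a # r) n = (if n = 0 then 0 else 1 / real n ^ a * mzv_trunc (n - 1) r)"
  by (simp add: mzv_term_def)

lemma mzv_trunc_nonneg: "0 \<le> mzv_trunc N as"
  by (induction as arbitrary: N) (auto intro!: sum_nonneg)

lemma mzv_term_nonneg: "0 \<le> mzv_term as n"
  by (auto simp: mzv_term_def mzv_trunc_nonneg split: list.splits)

lemma mzv_trunc_eq_sum_term: "mzv_trunc N as = (\<Sum>n\<le>N. mzv_term as n)"
proof (cases as)
  case Nil
  then show ?thesis by (simp add: mzv_term_Nil)
next
  case (Cons a r)
  have "(\<Sum>n\<le>N. mzv_term as n) = (\<Sum>n=1..N. mzv_term as n)"
    by (rule sum.mono_neutral_right) (auto simp: mzv_term_Cons Cons)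
  then show ?thesis by (simp add: Cons mzv_term_Cons)
qed

lemma mzv_trunc_Cons_pred:
  "1 \<le> n \<Longrightarrow> mzv_trunc n (b # r) = mzv_trunc (n - 1) (b # r) + 1 / real n ^ b * mzv_trunc (n - 1) r"
  by (cases n) auto

section \<open>Connected sums and duality\<close>

definition connector :: "nat \<Rightarrow> nat \<Rightarrow> real" where
  "connector m n = fact m * fact n / fact (m + n)"

lemma connector_commute: "connector m n = connector n m"
  by (simp add: connector_def add.commute mult.commute)

lemma connector_0_right: "connector m 0 = 1"
  by (simp add: connector_def)

lemma connector_nonneg: "0 \<le> connector m n"
  by (simp add: connector_def)

lemma connector_Suc_right: "connector m (Suc n) = connector m n * real (Suc n) / real (m + Suc n)"
  by (simp add: connector_def fact_Suc field_simps del: of_nat_Suc)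

lemma connector_Suc_div:
  assumes "1 \<le> m"
  shows "connector m (Suc n) / real (Suc n) = (connector m n - connector m (Suc n)) / real m"
proof -
  have "real (m + Suc n) > 0" by simp
  then show ?thesis using assms unfolding connector_Suc_right
    by (simp add: field_simps del: of_nat_Suc of_nat_add) (simp add: algebra_simps)
qed

lemma connector_le: "1 \<le> m \<Longrightarrow> connector m n \<le> 1 / real (Suc n)"
proof (induction m rule: dec_induct)
  case base
  then show ?case by (simp add: connector_def fact_Suc field_simps)
next
  case (step m)
  have "connector (Suc m) n = connector m n * (real (Suc m) / real (Suc m + n))"
    by (simp add: connector_def fact_Suc field_simps)
  also have "\<dots> \<le> connector m n * 1"
    by (intro mult_left_mono) (auto simp: connector_nonneg)
  finally show ?case using step.IH by simp
qed

lemma LIMSEQ_connector: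
  assumes "1 \<le> m"
  shows "connector m \<longlonglongrightarrow> 0"
proof (rule tendsto_sandwich[where f = "\<lambda>_. 0" and h = "\<lambda>n. 1 / real (Suc n)"])
  show "(\<lambda>n. 1 / real (Suc n)) \<longlonglongrightarrow> 0"
    using LIMSEQ_inverse_real_of_nat by (simp add: inverse_eq_divide)
  show "\<forall>\<^sub>F n in sequentially. connector m n \<le> 1 / real (Suc n)"
    using connector_le[OF assms] by simp
qed (simp_all add: connector_nonneg)

lemma connector_tail_sums:
  assumes "1 \<le> m"
  shows "(\<lambda>j. connector m (Suc (n0 + j)) / real (Suc (n0 + j))) sums (connector m n0 / real m)"
proof -
  have partial: "(\<Sum>j<J. connector m (Suc (n0 + j)) / real (Suc (n0 + j)))
      = (connector m n0 - connector m (n0 + J)) / real m" for J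
  proof (induction J)
    case (Suc J)
    then show ?case using connector_Suc_div[OF assms, of "n0 + J"] by (simp add: diff_divide_distrib)
  qed simp
  have "(\<lambda>J. (connector m n0 - connector m (n0 + J)) / real m) \<longlonglongrightarrow> (connector m n0 - 0) / real m"
    using LIMSEQ_connector[OF assms] LIMSEQ_ignore_initial_segment[of "connector m" 0 n0] assms
    by (intro tendsto_intros) (auto simp: add.commute)
  then show ?thesis unfolding sums_def partial by simp
qed

lemma suminf_ennreal_commute:
  fixes f :: "nat \<Rightarrow> nat \<Rightarrow> ennreal"
  shows "(\<Sum>i. \<Sum>j. f i j) = (\<Sum>j. \<Sum>i. f i j)"
proof -
  have "(\<Sum>i. \<Sum>j. f i j) = (\<integral>\<^sup>+i. \<integral>\<^sup>+j. f i j \<partial>count_space UNIV \<partial>count_space UNIV)"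
    by (simp add: nn_integral_count_space_nat)
  also have "\<dots> = integral\<^sup>N (count_space UNIV) (\<lambda>(i, j). f i j)"
    using nn_integral_fst_count_space[of "\<lambda>(i, j). f i j"] by simp
  also have "\<dots> = (\<integral>\<^sup>+j. \<integral>\<^sup>+i. f i j \<partial>count_space UNIV \<partial>count_space UNIV)"
    using nn_integral_snd_count_space[of "\<lambda>(i, j). f i j"] by simp
  also have "\<dots> = (\<Sum>j. \<Sum>i. f i j)"
    by (simp add: nn_integral_count_space_nat)
  finally show ?thesis .
qed

lemma suminf_ennreal_connector_tail:
  assumes "1 \<le> m"
  shows "(\<Sum>n. ennreal (if n0 < n then connector m n / real n else 0)) = ennreal (connector m n0 / real m)"
proof -
  define g where "g = (\<lambda>n. if n0 < n then connector m n / real n else 0)"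
  have "(\<lambda>j. g (j + Suc n0)) = (\<lambda>j. connector m (Suc (n0 + j)) / real (Suc (n0 + j)))"
    by (auto simp: g_def add.commute)
  then have "(\<lambda>j. g (j + Suc n0)) sums (connector m n0 / real m)"
    using connector_tail_sums[OF assms, of n0] by simp
  then have "g sums (connector m n0 / real m + (\<Sum>i<Suc n0. g i))"
    using sums_iff_shift by blast
  moreover have "(\<Sum>i<Suc n0. g i) = 0" by (simp add: g_def)
  ultimately have "g sums (connector m n0 / real m)" by simp
  moreover have "\<And>n. 0 \<le> g n" by (simp add: g_def connector_nonneg)
  ultimately have "(\<Sum>n. ennreal (g n)) = ennreal (connector m n0 / real m)"
    by (simp add: suminf_ennreal2 sums_iff)
  then show ?thesis by (simp add: g_def)
qed

text \<open>After interchanging the sums, the tail sum of the connector absorbs the variable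
  that carries the exponent 1.\<close>
lemma suminf_ennreal_term_Cons_one:
  assumes "1 \<le> m"
  shows "(\<Sum>n. ennreal (mzv_term (1 # l) n * connector m n))
       = ennreal (1 / real m) * (\<Sum>n. ennreal (mzv_term l n * connector m n))"
proof -
  let ?f = "\<lambda>n' n. ennreal (if n' < n then mzv_term l n' * (connector m n / real n) else 0)"
  have expand: "ennreal (mzv_term (1 # l) n * connector m n) = (\<Sum>n'. ?f n' n)" for n
  proof -
    have "mzv_term (1 # l) n * connector m n = (\<Sum>n'<n. mzv_term l n' * (connector m n / real n))"
    proof (cases n)
      case (Suc n1)
      then have "mzv_trunc n1 l = (\<Sum>n'<n. mzv_term l n')"
        using mzv_trunc_eq_sum_term[of n1 l] lessThan_Suc_atMost by simp
      then show ?thesis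
        by (simp add: mzv_term_Cons Suc sum_distrib_right sum_divide_distrib del: sum.lessThan_Suc)
    qed (simp add: mzv_term_Cons)
    also have "ennreal \<dots> = (\<Sum>n'<n. ennreal (mzv_term l n' * (connector m n / real n)))"
      by (rule sum_ennreal[symmetric]) (simp add: mzv_term_nonneg connector_nonneg)
    also have "\<dots> = (\<Sum>n'. ?f n' n)"
      by (subst suminf_finite[of "{..<n}"]) auto
    finally show ?thesis .
  qed
  have "(\<Sum>n. ennreal (mzv_term (1 # l) n * connector m n)) = (\<Sum>n. \<Sum>n'. ?f n' n)"
    by (intro suminf_cong expand)
  also have "\<dots> = (\<Sum>n'. \<Sum>n. ?f n' n)"
    by (rule suminf_ennreal_commute)
  also have "\<dots> = (\<Sum>n'. ennreal (mzv_term l n') * (\<Sum>n. ennreal (if n' < n then connector m n / real n else 0)))"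
  proof (intro suminf_cong)
    fix n'
    have "?f n' n = ennreal (mzv_term l n') * ennreal (if n' < n then connector m n / real n else 0)" for n
      by (simp add: ennreal_mult[symmetric] mzv_term_nonneg connector_nonneg del: times_divide_eq_right)
    then show "(\<Sum>n. ?f n' n) = ennreal (mzv_term l n') * (\<Sum>n. ennreal (if n' < n then connector m n / real n else 0))"
      by simp
  qed
  also have "\<dots> = (\<Sum>n'. ennreal (mzv_term l n') * ennreal (connector m n' / real m))"
    by (simp add: suminf_ennreal_connector_tail[OF assms])
  also have "\<dots> = (\<Sum>n'. ennreal (1 / real m) * ennreal (mzv_term l n' * connector m n'))"
    by (auto intro!: suminf_cong simp: ennreal_mult''[symmetric] mzv_term_nonneg connector_nonneg)
  finally show ?thesis by simp
qed

definition connected_sum :: "nat list \<Rightarrow> nat list \<Rightarrow> ennreal" where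
  "connected_sum k l = (\<Sum>m. \<Sum>n. ennreal (mzv_term k m * connector m n * mzv_term l n))"

definition mzv_ennreal :: "nat list \<Rightarrow> ennreal" where
  "mzv_ennreal k = (\<Sum>m. ennreal (mzv_term k m))"

lemma connected_sum_commute: "connected_sum k l = connected_sum l k"
  unfolding connected_sum_def
  by (subst suminf_ennreal_commute) (simp add: connector_commute mult.commute mult.left_commute)

lemma connected_sum_Nil_right: "connected_sum k [] = mzv_ennreal k"
  unfolding connected_sum_def mzv_ennreal_def
  by (intro suminf_cong, subst suminf_finite[of "{0}"]) (auto simp: mzv_term_Nil connector_0_right)

lemma connected_sum_transport:
  assumes "1 \<le> c"
  shows "connected_sum (c # r) (1 # l) = connected_sum (Suc c # r) l"
  unfolding connected_sum_def
proof (rule suminf_cong)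
  fix m
  show "(\<Sum>n. ennreal (mzv_term (c # r) m * connector m n * mzv_term (1 # l) n)) =
        (\<Sum>n. ennreal (mzv_term (Suc c # r) m * connector m n * mzv_term l n))"
  proof (cases "m = 0")
    case True
    then show ?thesis by (simp add: mzv_term_Cons)
  next
    case False
    then have m: "1 \<le> m" by simp
    let ?t = "mzv_term (c # r) m"
    have t: "mzv_term (Suc c # r) m = ?t * (1 / real m)"
      using False by (simp add: mzv_term_Cons)
    have "(\<Sum>n. ennreal (?t * connector m n * mzv_term (1 # l) n))
        = ennreal ?t * (\<Sum>n. ennreal (mzv_term (1 # l) n * connector m n))"
      unfolding ennreal_suminf_cmult[symmetric]
      by (intro suminf_cong) (simp add: ennreal_mult[symmetric] mzv_term_nonneg connector_nonneg mult_ac)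
    also have "\<dots> = ennreal ?t * ennreal (1 / real m) * (\<Sum>n. ennreal (mzv_term l n * connector m n))"
      by (simp only: suminf_ennreal_term_Cons_one[OF m] mult.assoc)
    also have "\<dots> = (\<Sum>n. ennreal (?t * (1 / real m) * (mzv_term l n * connector m n)))"
      unfolding ennreal_suminf_cmult[symmetric]
      by (intro suminf_cong) (simp add: ennreal_mult[symmetric] mzv_term_nonneg connector_nonneg del: times_divide_eq_right)
    finally show ?thesis by (simp only: t mult_ac)
  qed
qed

lemma connected_sum_transport_replicate:
  assumes "1 \<le> c"
  shows "connected_sum (c # r) (replicate j 1 @ l) = connected_sum ((c + j) # r) l"
  using assms
proof (induction j arbitrary: c)
  case (Suc j)
  have "connected_sum (c # r) (replicate (Suc j) 1 @ l) = connected_sum (Suc c # r) (replicate j 1 @ l)"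
    using connected_sum_transport[OF Suc.prems] by simp
  also have "\<dots> = connected_sum ((Suc c + j) # r) l"
    by (rule Suc.IH) simp
  finally show ?case by simp
qed simp

text \<open>Both sides equal the connected sum of $\{1\}^{k+1}$ and $\{1\}^{a+1}$.\<close>
lemma mzv_ennreal_duality:
  "mzv_ennreal (Suc (Suc a) # replicate k 1) = mzv_ennreal (Suc (Suc k) # replicate a 1)"
proof -
  have shift: "mzv_ennreal (Suc (Suc a) # replicate k 1)
      = connected_sum (replicate (Suc k) 1) (replicate (Suc a) 1)" for a k
  proof -
    have "mzv_ennreal (Suc (Suc a) # replicate k 1) = connected_sum ((1 + Suc a) # replicate k 1) []"
      by (simp add: connected_sum_Nil_right)
    also have "\<dots> = connected_sum (1 # replicate k 1) (replicate (Suc a) 1 @ [])"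
      by (rule connected_sum_transport_replicate[symmetric]) simp
    finally show ?thesis by simp
  qed
  show ?thesis
    by (simp only: shift connected_sum_commute)
qed

section \<open>Convergence of multiple zeta values\<close>

lemma mzv_trunc_antimono:
  "list_all2 (\<lambda>a b. b \<le> a) as bs \<Longrightarrow> mzv_trunc N as \<le> mzv_trunc N bs"
proof (induction as arbitrary: bs N)
  case (Cons a as)
  then obtain b bs' where bs: "bs = b # bs'" and "b \<le> a" and rest: "list_all2 (\<lambda>a b. b \<le> a) as bs'"
    by (cases bs) auto
  have "mzv_trunc N (a # as) \<le> mzv_trunc N (b # bs')"
    unfolding mzv_trunc.simps
  proof (rule sum_mono)
    fix n assume "n \<in> {1..N}"
    then have "1 / real n ^ a \<le> 1 / real n ^ b"
      using \<open>b \<le> a\<close> by (intro divide_left_mono power_increasing) auto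
    then show "1 / real n ^ a * mzv_trunc (n - 1) as \<le> 1 / real n ^ b * mzv_trunc (n - 1) bs'"
      using Cons.IH[OF rest] by (intro mult_mono) (auto simp: mzv_trunc_nonneg)
  qed
  then show ?case by (simp add: bs)
qed simp

lemma mzv_term_antimono:
  assumes "list_all2 (\<lambda>a b. b \<le> a) as bs"
  shows "mzv_term as n \<le> mzv_term bs n"
proof (cases as)
  case (Cons a r)
  with assms obtain b bs' where bs: "bs = b # bs'" and "b \<le> a" and rest: "list_all2 (\<lambda>a b. b \<le> a) r bs'"
    by (cases bs) auto
  have "1 / real n ^ a * mzv_trunc (n - 1) r \<le> 1 / real n ^ b * mzv_trunc (n - 1) bs'" if "n \<noteq> 0"
    using that \<open>b \<le> a\<close> mzv_trunc_antimono[OF rest]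
    by (intro mult_mono divide_left_mono power_increasing) (auto simp: mzv_trunc_nonneg)
  then show ?thesis by (simp add: Cons bs mzv_term_Cons)
qed (use assms in simp)

lemma mzv_ennreal_single_finite:
  assumes "2 \<le> a"
  shows "mzv_ennreal [a] \<noteq> \<infinity>"
proof -
  have "mzv_term [a] n = inverse (real n ^ a)" for n
    using assms by (simp add: mzv_term_Cons divide_inverse)
  then have "mzv_ennreal [a] = (\<Sum>n. ennreal (inverse (real n ^ a)))"
    by (simp add: mzv_ennreal_def)
  also have "\<dots> = ennreal (\<Sum>n. inverse (real n ^ a))"
    by (rule suminf_ennreal2) (auto intro: inverse_power_summable assms)
  finally show ?thesis by simp
qed

definition admissible :: "nat list \<Rightarrow> bool" where
  "admissible as \<longleftrightarrow> as \<noteq> [] \<and> 2 \<le> hd as \<and> (\<forall>a\<in>set as. 1 \<le> a)"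

text \<open>An admissible index is dominated entrywise by $(2,\{1\}^r)$, and by duality
  $\zeta(2,\{1\}^r) = \zeta(r+2)$ is finite.\<close>
lemma mzv_ennreal_finite:
  assumes "admissible as"
  shows "mzv_ennreal as \<noteq> \<infinity>"
proof -
  obtain a r where as: "as = a # r" and "2 \<le> a" and r: "\<forall>x\<in>set r. 1 \<le> x"
    using assms by (cases as) (auto simp: admissible_def)
  have "list_all2 (\<lambda>a b. b \<le> a) r (replicate (length r) 1)"
    using r by (induction r) auto
  then have "list_all2 (\<lambda>a b. b \<le> a) as (2 # replicate (length r) 1)"
    using \<open>2 \<le> a\<close> by (simp add: as)
  then have "mzv_ennreal as \<le> mzv_ennreal (2 # replicate (length r) 1)"
    unfolding mzv_ennreal_def by (intro suminf_le ennreal_leI mzv_term_antimono) auto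
  also have "\<dots> = mzv_ennreal [Suc (Suc (length r))]"
    using mzv_ennreal_duality[of 0 "length r"] by (simp add: numeral_2_eq_2)
  finally show ?thesis
    using mzv_ennreal_single_finite[of "Suc (Suc (length r))"] by (auto simp: top_unique)
qed

lemma
  assumes "mzv_ennreal as \<noteq> \<infinity>"
  shows summable_mzv_term: "summable (mzv_term as)"
    and LIMSEQ_mzv_trunc_suminf: "(\<lambda>N. mzv_trunc N as) \<longlonglongrightarrow> suminf (mzv_term as)"
    and mzv_ennreal_eq_suminf: "mzv_ennreal as = ennreal (suminf (mzv_term as))"
proof -
  show summable: "summable (mzv_term as)"
    using assms by (intro summable_suminf_not_top mzv_term_nonneg) (simp add: mzv_ennreal_def)
  have "(\<lambda>N. \<Sum>i<Suc N. mzv_term as i) \<longlonglongrightarrow> suminf (mzv_term as)"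
    using LIMSEQ_Suc[OF summable_LIMSEQ[OF summable]] .
  then show "(\<lambda>N. mzv_trunc N as) \<longlonglongrightarrow> suminf (mzv_term as)"
    by (simp only: mzv_trunc_eq_sum_term lessThan_Suc_atMost)
  show "mzv_ennreal as = ennreal (suminf (mzv_term as))"
    unfolding mzv_ennreal_def by (rule suminf_ennreal2) (rule mzv_term_nonneg, rule summable)
qed

definition decr_tuples :: "nat \<Rightarrow> nat \<Rightarrow> nat list set" where
  "decr_tuples r N = {ns. length ns = r \<and> sorted_wrt (>) ns \<and> (\<forall>n\<in>set ns. 1 \<le> n \<and> n \<le> N)}"

definition mzv_summand :: "nat list \<Rightarrow> nat list \<Rightarrow> real" where
  "mzv_summand as ns = (\<Prod>i<length as. 1 / real (ns ! i) ^ (as ! i))"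

lemma mzv_summand_nonneg: "0 \<le> mzv_summand as ns"
  by (auto simp: mzv_summand_def intro!: prod_nonneg)

lemma mzv_summand_Cons: "mzv_summand (a # as) (n # ns) = 1 / real n ^ a * mzv_summand as ns"
  unfolding mzv_summand_def length_Cons prod.lessThan_Suc_shift by simp

lemma finite_decr_tuples: "finite (decr_tuples r N)"
proof (rule finite_subset)
  show "decr_tuples r N \<subseteq> {xs. set xs \<subseteq> {0..N} \<and> length xs \<le> r}"
    by (auto simp: decr_tuples_def)
qed (rule finite_lists_length_le, simp)

lemma decr_tuples_Suc:
  "decr_tuples (Suc r) N = (\<lambda>(n, ns). n # ns) ` (SIGMA n:{1..N}. decr_tuples r (n - 1))"
proof (intro equalityI subsetI)
  fix xs assume "xs \<in> decr_tuples (Suc r) N"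
  then obtain n ns where xs: "xs = n # ns" and "(n, ns) \<in> (SIGMA n:{1..N}. decr_tuples r (n - 1))"
    by (fastforce simp: decr_tuples_def length_Suc_conv)
  then show "xs \<in> (\<lambda>(n, ns). n # ns) ` (SIGMA n:{1..N}. decr_tuples r (n - 1))"
    by force
next
  fix xs assume "xs \<in> (\<lambda>(n, ns). n # ns) ` (SIGMA n:{1..N}. decr_tuples r (n - 1))"
  then obtain n ns where "xs = n # ns" "1 \<le> n" "n \<le> N" "ns \<in> decr_tuples r (n - 1)"
    by auto
  then show "xs \<in> decr_tuples (Suc r) N"
    by (fastforce simp: decr_tuples_def)
qed

lemma mzv_trunc_eq_sum_decr_tuples:
  "mzv_trunc N as = (\<Sum>ns\<in>decr_tuples (length as) N. mzv_summand as ns)"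
proof (induction as arbitrary: N)
  case Nil
  have "decr_tuples 0 N = {[]}" by (auto simp: decr_tuples_def)
  then show ?case by (simp add: mzv_summand_def)
next
  case (Cons a as)
  have inj: "inj_on (\<lambda>(n, ns). n # ns) (SIGMA n:{1..N}. decr_tuples (length as) (n - 1))"
    by (auto simp: inj_on_def)
  have "(\<Sum>ns\<in>decr_tuples (length (a # as)) N. mzv_summand (a # as) ns)
      = (\<Sum>p\<in>(SIGMA n:{1..N}. decr_tuples (length as) (n - 1)). mzv_summand (a # as) ((\<lambda>(n, ns). n # ns) p))"
    by (simp only: length_Cons decr_tuples_Suc sum.reindex[OF inj] o_def)
  also have "\<dots> = (\<Sum>n=1..N. \<Sum>ns\<in>decr_tuples (length as) (n - 1). mzv_summand (a # as) (n # ns))"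
    by (subst sum.Sigma) (auto simp: finite_decr_tuples intro!: sum.cong)
  also have "\<dots> = (\<Sum>n=1..N. 1 / real n ^ a * mzv_trunc (n - 1) as)"
    by (simp add: mzv_summand_Cons Cons.IH sum_distrib_left)
  finally show ?case by simp
qed

lemma finite_subset_decr_tuples:
  assumes "finite G" "G \<subseteq> {ns. length ns = r \<and> sorted_wrt (>) ns \<and> (\<forall>n\<in>set ns. 1 \<le> n)}"
  shows "G \<subseteq> decr_tuples r (\<Sum>ns\<in>G. sum_list ns)"
proof
  fix ns assume ns: "ns \<in> G"
  have "n \<le> (\<Sum>ns\<in>G. sum_list ns)" if "n \<in> set ns" for n
  proof -
    have "n \<le> sum_list ns" using that by (intro member_le_sum_list) auto
    also have "\<dots> \<le> (\<Sum>ns\<in>G. sum_list ns)"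
      by (rule member_le_sum) (use ns assms(1) in auto)
    finally show ?thesis .
  qed
  then show "ns \<in> decr_tuples r (\<Sum>ns\<in>G. sum_list ns)"
    using ns assms(2) by (auto simp: decr_tuples_def)
qed

text \<open>Every finite set of index tuples lies in some truncation, so the unconditional sum
  is squeezed between the truncations and their limit.\<close>
lemma mzv_eq_suminf_term:
  assumes "mzv_ennreal as \<noteq> \<infinity>"
  shows "mzv as = suminf (mzv_term as)"
proof -
  define S where "S = {ns :: nat list. length ns = length as \<and> sorted_wrt (>) ns \<and> (\<forall>n\<in>set ns. 1 \<le> n)}"
  define L where "L = suminf (mzv_term as)"
  have trunc_le: "mzv_trunc N as \<le> L" for N
  proof -
    have "mzv_trunc N as = (\<Sum>i<Suc N. mzv_term as i)"
      by (simp only: mzv_trunc_eq_sum_term lessThan_Suc_atMost)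
    also have "\<dots> \<le> L"
      unfolding L_def by (rule sum_le_suminf) (auto simp: summable_mzv_term[OF assms] mzv_term_nonneg)
    finally show ?thesis .
  qed
  have finite_le: "sum (mzv_summand as) G \<le> L" if "finite G" "G \<subseteq> S" for G
  proof -
    have "sum (mzv_summand as) G \<le> sum (mzv_summand as) (decr_tuples (length as) (\<Sum>ns\<in>G. sum_list ns))"
      using that unfolding S_def
      by (intro sum_mono2[OF finite_decr_tuples finite_subset_decr_tuples]) (auto simp: mzv_summand_nonneg)
    also have "\<dots> \<le> L" using trunc_le by (simp add: mzv_trunc_eq_sum_decr_tuples)
    finally show ?thesis .
  qed
  have summable: "mzv_summand as summable_on S"
    by (rule nonneg_bdd_above_summable_on)
      (auto simp: mzv_summand_nonneg bdd_above_def intro!: exI[of _ L] finite_le)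
  have "infsum (mzv_summand as) S \<le> L"
    by (rule infsum_le_finite_sums[OF summable finite_le])
  moreover have "mzv_trunc N as \<le> infsum (mzv_summand as) S" for N
    unfolding mzv_trunc_eq_sum_decr_tuples
    by (rule finite_sum_le_infsum[OF summable finite_decr_tuples])
      (auto simp: mzv_summand_nonneg decr_tuples_def S_def)
  then have "L \<le> infsum (mzv_summand as) S"
    unfolding L_def by (intro LIMSEQ_le_const2[OF LIMSEQ_mzv_trunc_suminf[OF assms]]) auto
  moreover have "mzv as = infsum (mzv_summand as) S"
    unfolding mzv_def mzv_summand_def S_def by (rule refl)
  ultimately show ?thesis
    unfolding L_def by linarith
qed

lemma
  assumes "admissible as"
  shows LIMSEQ_mzv_trunc: "(\<lambda>N. mzv_trunc N as) \<longlonglongrightarrow> mzv as"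
    and mzv_ennreal_eq_mzv: "mzv_ennreal as = ennreal (mzv as)"
  using LIMSEQ_mzv_trunc_suminf mzv_ennreal_eq_suminf mzv_eq_suminf_term mzv_ennreal_finite[OF assms]
  by auto

lemma mzv_nonneg:
  assumes "admissible as"
  shows "0 \<le> mzv as"
  using mzv_ennreal_finite[OF assms]
  by (simp add: mzv_eq_suminf_term suminf_nonneg summable_mzv_term mzv_term_nonneg)

lemma mzv_duality: "mzv (Suc (Suc a) # replicate k 1) = mzv (Suc (Suc k) # replicate a 1)"
proof -
  have "admissible (Suc (Suc a) # replicate k 1)" "admissible (Suc (Suc k) # replicate a 1)"
    by (auto simp: admissible_def)
  then show ?thesis
    using mzv_ennreal_duality[of a k] by (simp add: mzv_ennreal_eq_mzv mzv_nonneg)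
qed

section \<open>Symmetric functions of $1, 1/2, \ldots, 1/N$\<close>

fun mzsv_trunc :: "nat \<Rightarrow> nat list \<Rightarrow> real" where
  "mzsv_trunc N [] = 1"
| "mzsv_trunc N (a # as) = (\<Sum>n=1..N. 1 / real n ^ a * mzsv_trunc n as)"

definition complete_sym :: "nat \<Rightarrow> nat \<Rightarrow> real" where
  "complete_sym N k = mzsv_trunc N (replicate k 1)"

definition elementary_sym :: "nat \<Rightarrow> nat \<Rightarrow> real" where
  "elementary_sym N k = mzv_trunc N (replicate k 1)"

lemma complete_sym_0 [simp]: "complete_sym N 0 = 1" "complete_sym 0 (Suc k) = 0"
  by (simp_all add: complete_sym_def)

lemma elementary_sym_0 [simp]: "elementary_sym N 0 = 1" "elementary_sym 0 (Suc k) = 0"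
  by (simp_all add: elementary_sym_def)

lemma complete_sym_Suc:
  "complete_sym (Suc N) (Suc k) = complete_sym N (Suc k) + 1 / real (Suc N) * complete_sym (Suc N) k"
  by (simp add: complete_sym_def)

lemma elementary_sym_Suc:
  "elementary_sym (Suc N) (Suc k) = elementary_sym N (Suc k) + 1 / real (Suc N) * elementary_sym N k"
  by (simp add: elementary_sym_def)

lemma harm_Suc: "harm i (Suc N) = harm i N + (1 / real (Suc N)) ^ i"
  by (simp add: harm_def power_one_over)

lemma harm_pred: "1 \<le> n \<Longrightarrow> harm k n = harm k (n - 1) + 1 / real n ^ k"
  by (cases n) (auto simp: harm_def)

lemma sum_atLeast1_Suc_split: "(\<Sum>i=1..Suc k. f i) = f 1 + (\<Sum>i=1..k. f (Suc i))"
proof -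
  have "(\<Sum>i=1..Suc k. f i) = f 1 + (\<Sum>i=Suc 1..Suc k. f i)"
    by (rule sum.atLeast_Suc_atMost) simp
  then show ?thesis
    by (simp only: sum.shift_bounds_cl_Suc_ivl)
qed

text \<open>Adjoining a variable $x$: $h_j' = h_j + x h_{j-1}'$ preserves Newton's identities,
  the power sums becoming $p_i + x^i$.\<close>
lemma newton_complete_adjoin:
  fixes A B q :: "nat \<Rightarrow> real"
  assumes adjoin: "\<And>j. A j = B j + x * (if j = 0 then 0 else A (j - 1))"
    and newton: "\<And>k. real k * B k = (\<Sum>i=1..k. q i * B (k - i))"
  shows "real k * A k = (\<Sum>i=1..k. (q i + x ^ i) * A (k - i))"
proof (induction k)
  case (Suc k)
  have shift: "(\<Sum>i=1..Suc k. q i * A (Suc k - i))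
      = (\<Sum>i=1..Suc k. q i * B (Suc k - i)) + x * (\<Sum>i=1..k. q i * A (k - i))"
  proof -
    have "(\<Sum>i=1..Suc k. q i * A (Suc k - i)) = (\<Sum>i=1..Suc k. q i * B (Suc k - i)
        + x * (q i * (if Suc k - i = 0 then 0 else A (Suc k - i - 1))))"
      by (intro sum.cong refl) (subst adjoin, simp add: algebra_simps)
    also have "\<dots> = (\<Sum>i=1..Suc k. q i * B (Suc k - i))
        + x * (\<Sum>i=1..Suc k. q i * (if Suc k - i = 0 then 0 else A (Suc k - i - 1)))"
      by (simp add: sum.distrib sum_distrib_left)
    also have "(\<Sum>i=1..Suc k. q i * (if Suc k - i = 0 then 0 else A (Suc k - i - 1)))
        = (\<Sum>i=1..k. q i * A (k - i))"
      by (auto intro!: sum.cong simp: Suc_diff_le)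
    finally show ?thesis .
  qed
  have powers: "(\<Sum>i=1..Suc k. x ^ i * A (Suc k - i)) = x * A k + x * (\<Sum>i=1..k. x ^ i * A (k - i))"
    by (subst sum_atLeast1_Suc_split) (simp add: sum_distrib_left mult_ac)
  have "real (Suc k) * A (Suc k) = real (Suc k) * B (Suc k) + x * A k + x * (real k * A k)"
    by (subst adjoin) (simp add: algebra_simps)
  also have "\<dots> = (\<Sum>i=1..Suc k. q i * B (Suc k - i)) + x * A k + x * (\<Sum>i=1..k. (q i + x ^ i) * A (k - i))"
    by (simp only: newton Suc.IH)
  also have "\<dots> = (\<Sum>i=1..Suc k. q i * A (Suc k - i)) + (\<Sum>i=1..Suc k. x ^ i * A (Suc k - i))"
    by (simp only: shift powers distrib_right sum.distrib) (simp add: algebra_simps)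
  also have "\<dots> = (\<Sum>i=1..Suc k. (q i + x ^ i) * A (Suc k - i))"
    by (simp add: distrib_right sum.distrib)
  finally show ?case .
qed simp

text \<open>The same for the elementary symmetric functions, where $e_j' = e_j + x e_{j-1}$ and
  Newton's identities carry alternating signs.\<close>
lemma newton_elementary_adjoin:
  fixes A B q :: "nat \<Rightarrow> real"
  assumes adjoin: "\<And>j. A j = B j + x * (if j = 0 then 0 else B (j - 1))"
    and newton: "\<And>k. real k * B k = (\<Sum>i=1..k. (-1) ^ (i + 1) * q i * B (k - i))"
  shows "real k * A k = (\<Sum>i=1..k. (-1) ^ (i + 1) * (q i + x ^ i) * A (k - i))"
proof (cases k)
  case (Suc k)
  define sg :: "nat \<Rightarrow> real" where "sg i = (-1) ^ (i + 1)" for i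
  have shift: "(\<Sum>i=1..Suc k. sg i * f i * A (Suc k - i))
      = (\<Sum>i=1..Suc k. sg i * f i * B (Suc k - i)) + x * (\<Sum>i=1..k. sg i * f i * B (k - i))" for f
  proof -
    have "(\<Sum>i=1..Suc k. sg i * f i * A (Suc k - i)) = (\<Sum>i=1..Suc k. sg i * f i * B (Suc k - i)
        + x * (sg i * f i * (if Suc k - i = 0 then 0 else B (Suc k - i - 1))))"
      by (intro sum.cong refl) (subst adjoin, simp add: algebra_simps)
    also have "\<dots> = (\<Sum>i=1..Suc k. sg i * f i * B (Suc k - i))
        + x * (\<Sum>i=1..Suc k. sg i * f i * (if Suc k - i = 0 then 0 else B (Suc k - i - 1)))"
      by (simp add: sum.distrib sum_distrib_left)
    also have "(\<Sum>i=1..Suc k. sg i * f i * (if Suc k - i = 0 then 0 else B (Suc k - i - 1)))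
        = (\<Sum>i=1..k. sg i * f i * B (k - i))"
      by (auto intro!: sum.cong simp: Suc_diff_le)
    finally show ?thesis .
  qed
  have powers: "(\<Sum>i=1..Suc k. sg i * x ^ i * B (Suc k - i)) = x * B k - x * (\<Sum>i=1..k. sg i * x ^ i * B (k - i))"
    by (subst sum_atLeast1_Suc_split) (simp add: sum_distrib_left sg_def sum_negf[symmetric] mult_ac)
  have "(\<Sum>i=1..Suc k. sg i * (q i + x ^ i) * A (Suc k - i))
      = (\<Sum>i=1..Suc k. sg i * q i * A (Suc k - i)) + (\<Sum>i=1..Suc k. sg i * x ^ i * A (Suc k - i))"
    by (simp add: sum.distrib algebra_simps)
  also have "\<dots> = real (Suc k) * (B (Suc k) + x * B k)"
    unfolding shift powers using newton[of "Suc k"] newton[of k]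
    by (simp add: sg_def algebra_simps)
  also have "\<dots> = real (Suc k) * A (Suc k)"
    using adjoin[of "Suc k"] by simp
  finally show ?thesis using Suc by (simp add: sg_def)
qed simp

lemma complete_sym_newton: "real k * complete_sym N k = (\<Sum>i=1..k. harm i N * complete_sym N (k - i))"
proof (induction N arbitrary: k)
  case 0
  then show ?case by (cases k) (auto simp: harm_def)
next
  case (Suc N)
  have "real k * complete_sym (Suc N) k
      = (\<Sum>i=1..k. (harm i N + (1 / real (Suc N)) ^ i) * complete_sym (Suc N) (k - i))"
    by (rule newton_complete_adjoin[OF _ Suc.IH], rename_tac j, case_tac j) (auto simp: complete_sym_Suc)
  then show ?case by (simp add: harm_Suc)
qed

lemma elementary_sym_newton:
  "real k * elementary_sym N k = (\<Sum>i=1..k. (-1) ^ (i + 1) * harm i N * elementary_sym N (k - i))"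
proof (induction N arbitrary: k)
  case 0
  then show ?case by (cases k) (auto simp: harm_def)
next
  case (Suc N)
  have "real k * elementary_sym (Suc N) k
      = (\<Sum>i=1..k. (-1) ^ (i + 1) * (harm i N + (1 / real (Suc N)) ^ i) * elementary_sym (Suc N) (k - i))"
    by (rule newton_elementary_adjoin[OF _ Suc.IH], rename_tac j, case_tac j) (auto simp: elementary_sym_Suc)
  then show ?case by (simp add: harm_Suc)
qed

section \<open>The polynomials $P_k$ and $Q_k$\<close>

definition pv_monomial :: "nat \<Rightarrow> (nat \<Rightarrow> nat) \<Rightarrow> (nat \<Rightarrow> real) \<Rightarrow> real" where
  "pv_monomial n m y = (\<Prod>j=1..n. (y j / real j) ^ m j / fact (m j))"

lemma polyQ_eq_sum_pv_monomial: "polyQ n y = (\<Sum>m\<in>partvecs n. pv_monomial n m y)"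
  unfolding polyQ_def pv_monomial_def by (intro sum.cong refl) (simp add: prod_dividef)

lemma polyP_eq_polyQ: "polyP n y = polyQ n (\<lambda>i. (-1) ^ (i + 1) * y i)"
  unfolding polyP_def polyQ_def
proof (intro sum.cong refl)
  fix m
  have "(\<Prod>i=1..n. ((-1) ^ (i + 1) * y i / real i) ^ m i)
      = (\<Prod>i=1..n. ((-1::real) ^ (i + 1)) ^ m i) * (\<Prod>i=1..n. (y i / real i) ^ m i)"
    by (simp only: prod.distrib[symmetric] power_mult_distrib[symmetric] times_divide_eq_right mult.assoc)
  also have "(\<Prod>i=1..n. ((-1::real) ^ (i + 1)) ^ m i) = (\<Prod>i\<in>{i\<in>{1..n}. even i}. (-1::real) ^ m i)"
    by (subst prod.inter_filter) (auto intro!: prod.cong simp: power_mult[symmetric])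
  also have "\<dots> = (-1) ^ (\<Sum>i\<in>{i\<in>{1..n}. even i}. m i)"
    by (simp add: power_sum)
  finally show "(-1) ^ (\<Sum>i\<in>{i\<in>{1..n}. even i}. m i) / (\<Prod>i=1..n. fact (m i)) * (\<Prod>i=1..n. (y i / real i) ^ m i)
      = 1 / (\<Prod>i=1..n. fact (m i)) * (\<Prod>i=1..n. ((-1) ^ (i + 1) * y i / real i) ^ m i)"
    by simp
qed

lemma partvecs_zero: "m \<in> partvecs n \<Longrightarrow> j \<notin> {1..n} \<Longrightarrow> m j = 0"
  by (auto simp: partvecs_def)

lemma partvecs_weight: "m \<in> partvecs n \<Longrightarrow> (\<Sum>i=1..n. i * m i) = n"
  by (auto simp: partvecs_def)

lemma partvecs_weight_le:
  assumes "m \<in> partvecs n" "J \<subseteq> {1..n}"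
  shows "(\<Sum>j\<in>J. j * m j) \<le> n"
proof -
  have "(\<Sum>j\<in>J. j * m j) \<le> (\<Sum>j=1..n. j * m j)"
    using assms(2) by (intro sum_mono2) auto
  then show ?thesis using partvecs_weight[OF assms(1)] by simp
qed

lemma finite_partvecs: "finite (partvecs n)"
proof (rule finite_subset)
  show "partvecs n \<subseteq> {f. \<forall>x. (x \<in> {1..n} \<longrightarrow> f x \<in> {0..n}) \<and> (x \<notin> {1..n} \<longrightarrow> f x = 0)}"
  proof safe
    fix m x assume m: "m \<in> partvecs n" and x: "x \<in> {1..n}"
    have "m x \<le> x * m x" using x by simp
    also have "\<dots> \<le> n" using partvecs_weight_le[OF m, of "{x}"] x by simp
    finally show "m x \<in> {0..n}" by simp
  qed (auto simp: partvecs_zero)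
qed (rule finite_set_of_finite_funs, auto)

lemma polyQ_0: "polyQ 0 y = 1"
proof -
  have "partvecs 0 = {\<lambda>_. 0}" by (auto simp: partvecs_def)
  then show ?thesis by (simp add: polyQ_def)
qed

lemma weight_fun_upd:
  "finite A \<Longrightarrow> i \<in> A \<Longrightarrow> (\<Sum>l\<in>A. l * (m(i := v)) l) + i * m i = (\<Sum>l\<in>A. l * m l) + i * v"
  by (simp add: sum.remove add_ac)

lemma partvecs_fun_upd_Suc:
  assumes m: "m \<in> partvecs (k - i)" and i: "i \<in> {1..k}"
  shows "m(i := Suc (m i)) \<in> partvecs k"
proof -
  have "(\<Sum>l=1..k. l * m l) = (\<Sum>l=1..k-i. l * m l)"
    using partvecs_zero[OF m] by (intro sum.mono_neutral_right) auto
  then have "(\<Sum>l=1..k. l * (m(i := Suc (m i))) l) = k"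
    using weight_fun_upd[of "{1..k}" i m "Suc (m i)"] partvecs_weight[OF m] i by simp
  moreover have "j \<in> {1..k}" if "(m(i := Suc (m i))) j \<noteq> 0" for j
  proof (cases "j = i")
    case False
    then have "j \<in> {1..k-i}" using that partvecs_zero[OF m, of j] by auto
    then show ?thesis by auto
  qed (use i in simp)
  ultimately show ?thesis unfolding partvecs_def by blast
qed

lemma partvecs_fun_upd_pred:
  assumes m: "m \<in> partvecs k" and i: "i \<in> {1..k}" and "0 < m i"
  shows "m(i := m i - 1) \<in> partvecs (k - i)"
proof -
  let ?m = "m(i := m i - 1)"
  have supp: "j \<in> {1..k-i}" if "?m j \<noteq> 0" for j
  proof (cases "j = i")
    case True
    then have "i * 2 \<le> i * m i" using that by simp
    also have "\<dots> \<le> k" using partvecs_weight_le[OF m, of "{i}"] i by simp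
    finally show ?thesis using True i by auto
  next
    case False
    then have "m j \<noteq> 0" using that by simp
    then have j: "j \<in> {1..k}" using partvecs_zero[OF m, of j] by auto
    have "j * 1 + i * 1 \<le> j * m j + i * m i"
      using \<open>m j \<noteq> 0\<close> \<open>0 < m i\<close> by (intro add_mono mult_le_mono) auto
    also have "\<dots> \<le> k" using partvecs_weight_le[OF m, of "{i, j}"] i j False by simp
    finally show ?thesis using j by auto
  qed
  have "(\<Sum>l=1..k. l * ?m l) = k - i"
    using weight_fun_upd[of "{1..k}" i m "m i - 1"] partvecs_weight[OF m] i \<open>0 < m i\<close>
    by (simp add: diff_mult_distrib2)
  moreover have "(\<Sum>l=1..k-i. l * ?m l) = (\<Sum>l=1..k. l * ?m l)"
  proof (rule sum.mono_neutral_left)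
    show "\<forall>l\<in>{1..k} - {1..k-i}. l * ?m l = 0"
      using supp by (metis DiffE mult_eq_0_iff)
  qed auto
  ultimately show ?thesis
    unfolding partvecs_def by (intro CollectI conjI allI impI supp) simp_all
qed

lemma pv_monomial_remove:
  "i \<in> {1..n} \<Longrightarrow> pv_monomial n m y
    = (y i / real i) ^ m i / fact (m i) * (\<Prod>j\<in>{1..n} - {i}. (y j / real j) ^ m j / fact (m j))"
  unfolding pv_monomial_def by (simp add: prod.remove)

lemma pv_monomial_mono_neutral:
  assumes "m \<in> partvecs n" "n \<le> n'"
  shows "pv_monomial n m y = pv_monomial n' m y"
  unfolding pv_monomial_def
  using assms partvecs_zero[OF assms(1)] by (intro prod.mono_neutral_left) auto

lemma pv_monomial_fun_upd_Suc:
  assumes m: "m \<in> partvecs (k - i)" and i: "i \<in> {1..k}"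
  shows "real (i * Suc (m i)) * pv_monomial k (m(i := Suc (m i))) y = y i * pv_monomial (k - i) m y"
proof -
  define R where "R = (\<Prod>j\<in>{1..k} - {i}. (y j / real j) ^ m j / fact (m j))"
  have "(\<Prod>j\<in>{1..k} - {i}. (y j / real j) ^ (m(i := Suc (m i))) j / fact ((m(i := Suc (m i))) j)) = R"
    unfolding R_def by (intro prod.cong) auto
  then have upd: "pv_monomial k (m(i := Suc (m i))) y = (y i / real i) ^ Suc (m i) / fact (Suc (m i)) * R"
    unfolding pv_monomial_remove[OF i] by simp
  have "pv_monomial (k - i) m y = (y i / real i) ^ m i / fact (m i) * R"
    unfolding pv_monomial_mono_neutral[OF m diff_le_self] pv_monomial_remove[OF i] R_def by simp
  moreover have "real i \<noteq> 0" using i by simp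
  ultimately show ?thesis
    unfolding upd by (simp add: fact_Suc field_simps del: of_nat_Suc) (simp add: algebra_simps)
qed

text \<open>Removing one part $i$ is a bijection from the partitions of $k$ having a part $i$
  onto the partitions of $k-i$.\<close>
lemma sum_partvecs_part_weight:
  assumes i: "i \<in> {1..k}"
  shows "(\<Sum>m\<in>partvecs k. real (i * m i) * pv_monomial k m y) = y i * polyQ (k - i) y"
proof -
  define S where "S = {m \<in> partvecs k. 0 < m i}"
  have "(\<Sum>m\<in>partvecs k. real (i * m i) * pv_monomial k m y) = (\<Sum>m\<in>S. real (i * m i) * pv_monomial k m y)"
    unfolding S_def by (rule sum.mono_neutral_right[OF finite_partvecs]) auto
  also have "\<dots> = (\<Sum>m\<in>partvecs (k - i). y i * pv_monomial (k - i) m y)"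
  proof (rule sum.reindex_bij_witness[where i = "\<lambda>m. m(i := Suc (m i))" and j = "\<lambda>m. m(i := m i - 1)"])
    fix m assume "m \<in> S"
    then have m: "m \<in> partvecs k" "0 < m i" by (auto simp: S_def)
    then show "m(i := m i - 1, i := Suc ((m(i := m i - 1)) i)) = m"
      by auto
    show pred: "m(i := m i - 1) \<in> partvecs (k - i)"
      by (rule partvecs_fun_upd_pred[OF m(1) i m(2)])
    show "y i * pv_monomial (k - i) (m(i := m i - 1)) y = real (i * m i) * pv_monomial k m y"
      using pv_monomial_fun_upd_Suc[OF pred i] m(2) by simp
  next
    fix m assume m: "m \<in> partvecs (k - i)"
    then show "(m(i := Suc (m i)))(i := (m(i := Suc (m i))) i - 1) = m"
      by auto
    show "m(i := Suc (m i)) \<in> S"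
      using partvecs_fun_upd_Suc[OF m i] by (simp add: S_def)
  qed
  finally show ?thesis
    by (simp add: polyQ_eq_sum_pv_monomial sum_distrib_left)
qed

lemma polyQ_newton: "real k * polyQ k y = (\<Sum>i=1..k. y i * polyQ (k - i) y)"
proof -
  have "real k * polyQ k y = (\<Sum>m\<in>partvecs k. (\<Sum>i=1..k. real (i * m i)) * pv_monomial k m y)"
    unfolding polyQ_eq_sum_pv_monomial sum_distrib_left
  proof (intro sum.cong refl)
    fix m assume "m \<in> partvecs k"
    then have "(\<Sum>i=1..k. real (i * m i)) = real k"
      using partvecs_weight by (simp only: of_nat_sum[symmetric])
    then show "real k * pv_monomial k m y = (\<Sum>i=1..k. real (i * m i)) * pv_monomial k m y"
      by simp
  qed
  also have "\<dots> = (\<Sum>i=1..k. \<Sum>m\<in>partvecs k. real (i * m i) * pv_monomial k m y)"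
    by (simp add: sum_distrib_right sum.swap[of _ "partvecs k"])
  also have "\<dots> = (\<Sum>i=1..k. y i * polyQ (k - i) y)"
    by (intro sum.cong refl sum_partvecs_part_weight) auto
  finally show ?thesis .
qed

lemma newton_recurrence_unique:
  fixes f g :: "nat \<Rightarrow> real"
  assumes "f 0 = 1" "g 0 = 1"
    and "\<And>k. real k * f k = (\<Sum>i=1..k. y i * f (k - i))"
    and "\<And>k. real k * g k = (\<Sum>i=1..k. y i * g (k - i))"
  shows "f k = g k"
proof (induction k rule: less_induct)
  case (less k)
  show ?case
  proof (cases k)
    case (Suc k')
    have "real k * f k = real k * g k"
      unfolding assms(3,4) by (intro sum.cong refl) (use less Suc in auto)
    then show ?thesis using Suc by simp
  qed (simp add: assms)
qed

lemma polyQ_harm: "polyQ k (\<lambda>i. harm i N) = complete_sym N k"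
  by (rule newton_recurrence_unique[where y = "\<lambda>i. harm i N"])
    (auto simp: polyQ_0 polyQ_newton complete_sym_newton)

lemma polyP_harm: "polyP k (\<lambda>i. harm i N) = elementary_sym N k"
  unfolding polyP_eq_polyQ
  by (rule newton_recurrence_unique[where y = "\<lambda>i. (-1) ^ (i + 1) * harm i N"])
    (auto simp: polyQ_0 polyQ_newton elementary_sym_newton mult.assoc)

section \<open>The three series\<close>

lemma sums_Suc_of_partial_sums:
  fixes f :: "nat \<Rightarrow> real"
  assumes "\<And>N. (\<Sum>n=1..N. f n) = g N" and "g \<longlonglongrightarrow> L"
  shows "(\<lambda>n. f (Suc n)) sums L"
  using assms unfolding sums_def by (simp flip: sum.atLeast1_atMost_eq)

lemma harm_series:
  assumes "2 \<le> s" "1 \<le> k"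
  shows "(\<lambda>n. harm k (Suc n) / real (Suc n) ^ s) sums (mzv [k + s] + mzv [s, k])"
proof (rule sums_Suc_of_partial_sums)
  fix N
  have "harm k n / real n ^ s = 1 / real n ^ (k + s) * 1 + 1 / real n ^ s * harm k (n - 1)"
    if "n \<in> {1..N}" for n
    using that harm_pred[of n k] by (simp add: field_simps power_add)
  then show "(\<Sum>n=1..N. harm k n / real n ^ s) = mzv_trunc N [k + s] + mzv_trunc N [s, k]"
    by (simp add: sum.distrib harm_def)
next
  have "admissible [k + s]" "admissible [s, k]"
    using assms by (auto simp: admissible_def)
  then show "(\<lambda>N. mzv_trunc N [k + s] + mzv_trunc N [s, k]) \<longlonglongrightarrow> mzv [k + s] + mzv [s, k]"
    by (intro tendsto_add LIMSEQ_mzv_trunc)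
qed

text \<open>$e_k(n)/n^{a+2}$ splits according to whether the largest index in $e_k(n)$ equals $n$;
  duality then turns $\zeta(a+2,\{1\}^k) + \zeta(a+3,\{1\}^{k-1})$ into the stated values.\<close>
lemma polyP_harm_series:
  assumes "1 \<le> k"
  shows "(\<lambda>n. polyP k (\<lambda>i. harm i (Suc n)) / real (Suc n) ^ (a + 2))
    sums (mzv ((k + 2) # replicate a 1) + mzv ((k + 1) # replicate (Suc a) 1))"
proof -
  obtain k' where k: "k = Suc k'" using assms by (cases k) auto
  let ?l1 = "Suc (Suc a) # replicate k 1" and ?l2 = "Suc (Suc (Suc a)) # replicate k' 1"
  have "(\<lambda>n. polyP k (\<lambda>i. harm i (Suc n)) / real (Suc n) ^ (a + 2)) sums (mzv ?l1 + mzv ?l2)"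
  proof (rule sums_Suc_of_partial_sums)
    fix N
    have "elementary_sym n k / real n ^ (a + 2)
        = 1 / real n ^ Suc (Suc a) * elementary_sym (n - 1) k
          + 1 / real n ^ Suc (Suc (Suc a)) * elementary_sym (n - 1) k'"
      if "n \<in> {1..N}" for n
      using that unfolding k
      by (cases n) (simp_all add: elementary_sym_Suc field_simps del: of_nat_Suc)
    then show "(\<Sum>n=1..N. polyP k (\<lambda>i. harm i n) / real n ^ (a + 2)) = mzv_trunc N ?l1 + mzv_trunc N ?l2"
      by (simp add: polyP_harm sum.distrib elementary_sym_def k)
  next
    have "admissible ?l1" "admissible ?l2"
      by (auto simp: admissible_def)
    then show "(\<lambda>N. mzv_trunc N ?l1 + mzv_trunc N ?l2) \<longlonglongrightarrow> mzv ?l1 + mzv ?l2"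
      by (intro tendsto_add LIMSEQ_mzv_trunc)
  qed
  moreover have "mzv ?l1 = mzv ((k + 2) # replicate a 1)" "mzv ?l2 = mzv ((k + 1) # replicate (Suc a) 1)"
    using mzv_duality[of a k] mzv_duality[of "Suc a" k'] by (simp_all add: k)
  ultimately show ?thesis by simp
qed

definition compositions_hd_ge :: "nat \<Rightarrow> nat \<Rightarrow> nat list set" where
  "compositions_hd_ge a j = {bs. bs \<noteq> [] \<and> sum_list bs = a + j \<and> (\<forall>x\<in>set bs. 1 \<le> x) \<and> a \<le> hd bs}"

lemma length_le_sum_list: "(\<forall>x\<in>set bs. 1 \<le> x) \<Longrightarrow> length bs \<le> sum_list (bs :: nat list)"
  by (induction bs) auto

lemma finite_compositions_hd_ge: "finite (compositions_hd_ge a j)"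
proof (rule finite_subset)
  show "compositions_hd_ge a j \<subseteq> {xs. set xs \<subseteq> {0..a + j} \<and> length xs \<le> a + j}"
  proof safe
    fix xs assume "xs \<in> compositions_hd_ge a j"
    then have xs: "sum_list xs = a + j" "\<forall>x\<in>set xs. 1 \<le> x"
      by (auto simp: compositions_hd_ge_def)
    then show "length xs \<le> a + j" using length_le_sum_list by metis
    fix x assume "x \<in> set xs"
    then have "x \<le> sum_list xs" by (intro member_le_sum_list) auto
    then show "x \<in> {0..a + j}" using xs by simp
  qed
qed (rule finite_lists_length_le, simp)

lemma compositions_hd_ge_0: "1 \<le> a \<Longrightarrow> compositions_hd_ge a 0 = {[a]}"
proof (intro equalityI subsetI)
  fix bs assume "bs \<in> compositions_hd_ge a 0"
  then obtain b r where bs: "bs = b # r" and "b + sum_list r = a" "a \<le> b" "\<forall>x\<in>set r. 1 \<le> x"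
    by (cases bs) (auto simp: compositions_hd_ge_def)
  then have "r = []" by (cases r) auto
  then show "bs \<in> {[a]}" using bs \<open>b + sum_list r = a\<close> by simp
qed (auto simp: compositions_hd_ge_def)

lemma compositions_hd_ge_Suc:
  assumes "1 \<le> a"
  shows "compositions_hd_ge a (Suc j)
    = (\<lambda>bs. a # bs) ` compositions_hd_ge 1 j \<union> (\<lambda>bs. (a + hd bs) # tl bs) ` compositions_hd_ge 1 j"
    (is "?C = ?P \<union> ?A")
proof (intro equalityI subsetI)
  fix cs assume "cs \<in> ?C"
  then obtain h t where cs: "cs = h # t" and "h + sum_list t = a + Suc j" "a \<le> h" "\<forall>x\<in>set t. 1 \<le> x"
    by (cases cs) (auto simp: compositions_hd_ge_def)
  show "cs \<in> ?P \<union> ?A"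
  proof (cases "h = a")
    case True
    then have "t \<noteq> []" "sum_list t = Suc j" using \<open>h + sum_list t = a + Suc j\<close> by auto
    then have "t \<in> compositions_hd_ge 1 j"
      using \<open>\<forall>x\<in>set t. 1 \<le> x\<close> by (cases t) (auto simp: compositions_hd_ge_def)
    then show ?thesis using cs True by blast
  next
    case False
    then have "(h - a) # t \<in> compositions_hd_ge 1 j"
      using \<open>h + sum_list t = a + Suc j\<close> \<open>a \<le> h\<close> \<open>\<forall>x\<in>set t. 1 \<le> x\<close>
      by (auto simp: compositions_hd_ge_def)
    moreover have "cs = (a + hd ((h - a) # t)) # tl ((h - a) # t)"
      using cs \<open>a \<le> h\<close> by simp
    ultimately show ?thesis by blast
  qed
next
  fix cs assume "cs \<in> ?P \<union> ?A"
  then show "cs \<in> ?C"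
  proof
    assume "cs \<in> ?A"
    then obtain h t where "h # t \<in> compositions_hd_ge 1 j" "cs = (a + h) # t"
      by (auto simp: compositions_hd_ge_def neq_Nil_conv)
    then show ?thesis by (auto simp: compositions_hd_ge_def)
  qed (use assms in \<open>auto simp: compositions_hd_ge_def\<close>)
qed

lemma sum_compositions_hd_ge_Suc:
  assumes "1 \<le> a"
  shows "(\<Sum>cs\<in>compositions_hd_ge a (Suc j). f cs)
    = (\<Sum>bs\<in>compositions_hd_ge 1 j. f (a # bs)) + (\<Sum>bs\<in>compositions_hd_ge 1 j. f ((a + hd bs) # tl bs))"
proof -
  let ?C = "compositions_hd_ge 1 j"
  have ne: "bs \<noteq> []" "1 \<le> hd bs" if "bs \<in> ?C" for bs
    using that by (auto simp: compositions_hd_ge_def)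
  have "inj_on (\<lambda>bs. a # bs) ?C"
    by (auto simp: inj_on_def)
  moreover have "inj_on (\<lambda>bs. (a + hd bs) # tl bs) ?C"
  proof (rule inj_onI)
    fix x y assume "x \<in> ?C" "y \<in> ?C" "(a + hd x) # tl x = (a + hd y) # tl y"
    then show "x = y" using ne by (metis add_left_cancel list.collapse list.inject)
  qed
  moreover have "(\<lambda>bs. a # bs) ` ?C \<inter> (\<lambda>bs. (a + hd bs) # tl bs) ` ?C = {}"
    using ne(2) by fastforce
  ultimately show ?thesis
    unfolding compositions_hd_ge_Suc[OF assms]
    by (simp add: sum.union_disjoint finite_compositions_hd_ge sum.reindex)
qed

text \<open>Expanding each inequality $n_i \geq n_{i+1}$ of a star sum into $>$ or $=$ merges adjacent
  exponents; this is the sum over compositions.\<close>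
lemma mzsv_trunc_eq_sum_compositions:
  "1 \<le> a \<Longrightarrow> mzsv_trunc N (a # replicate j 1) = (\<Sum>bs\<in>compositions_hd_ge a j. mzv_trunc N bs)"
proof (induction j arbitrary: a N)
  case 0
  then show ?case by (simp add: compositions_hd_ge_0)
next
  case (Suc j)
  let ?C = "compositions_hd_ge 1 j"
  have split: "1 / real n ^ a * mzv_trunc n bs
      = 1 / real n ^ a * mzv_trunc (n - 1) bs + 1 / real n ^ (a + hd bs) * mzv_trunc (n - 1) (tl bs)"
    if "n \<in> {1..N}" "bs \<in> ?C" for n bs
  proof -
    obtain b r where "bs = b # r"
      using \<open>bs \<in> ?C\<close> by (cases bs) (auto simp: compositions_hd_ge_def)
    with that show ?thesis
      by (simp add: mzv_trunc_Cons_pred field_simps power_add del: mzv_trunc.simps)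
  qed
  have "mzsv_trunc N (a # replicate (Suc j) 1) = (\<Sum>n=1..N. \<Sum>bs\<in>?C. 1 / real n ^ a * mzv_trunc n bs)"
    using Suc.IH[of 1] by (simp add: sum_distrib_left)
  also have "\<dots> = (\<Sum>n=1..N. \<Sum>bs\<in>?C. 1 / real n ^ a * mzv_trunc (n - 1) bs
      + 1 / real n ^ (a + hd bs) * mzv_trunc (n - 1) (tl bs))"
    by (intro sum.cong refl split)
  also have "\<dots> = (\<Sum>bs\<in>?C. mzv_trunc N (a # bs)) + (\<Sum>bs\<in>?C. mzv_trunc N ((a + hd bs) # tl bs))"
    by (simp add: sum.distrib, simp add: sum.swap[where A = "{Suc 0..N}"])
  also have "\<dots> = (\<Sum>cs\<in>compositions_hd_ge a (Suc j). mzv_trunc N cs)"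
    by (rule sum_compositions_hd_ge_Suc[OF Suc.prems, symmetric])
  finally show ?case .
qed

lemma polyQ_harm_series:
  assumes "2 \<le> s"
  shows "(\<lambda>n. polyQ k (\<lambda>i. harm i (Suc n)) / real (Suc n) ^ s) sums (\<Sum>bs\<in>compositions_hd_ge s k. mzv bs)"
proof (rule sums_Suc_of_partial_sums)
  fix N
  have "(\<Sum>n=1..N. polyQ k (\<lambda>i. harm i n) / real n ^ s) = mzsv_trunc N (s # replicate k 1)"
    by (simp add: polyQ_harm complete_sym_def divide_inverse mult.commute)
  also have "\<dots> = (\<Sum>bs\<in>compositions_hd_ge s k. mzv_trunc N bs)"
    using assms by (intro mzsv_trunc_eq_sum_compositions) simp
  finally show "(\<Sum>n=1..N. polyQ k (\<lambda>i. harm i n) / real n ^ s) = \<dots>" .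
next
  have "admissible bs" if "bs \<in> compositions_hd_ge s k" for bs
    using that assms by (auto simp: compositions_hd_ge_def admissible_def)
  then show "(\<lambda>N. \<Sum>bs\<in>compositions_hd_ge s k. mzv_trunc N bs) \<longlonglongrightarrow> (\<Sum>bs\<in>compositions_hd_ge s k. mzv bs)"
    by (intro tendsto_sum LIMSEQ_mzv_trunc)
qed

lemma sum_mzv_compositions_hd_ge_3:
  "(\<Sum>bs\<in>compositions_hd_ge 3 k. mzv bs) = mzv [k + 3] + (\<Sum>j=2..k+1. ST (k + 3) j)"
proof -
  have "length bs \<in> {1..k+1}" if bs: "bs \<in> compositions_hd_ge 3 k" for bs
  proof -
    obtain b r where "bs = b # r" "b + sum_list r = 3 + k" "3 \<le> b" "\<forall>x\<in>set r. 1 \<le> x"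
      using bs by (cases bs) (auto simp: compositions_hd_ge_def)
    then show ?thesis using length_le_sum_list[of r] by simp
  qed
  then have "(\<Sum>bs\<in>compositions_hd_ge 3 k. mzv bs)
      = (\<Sum>j=1..k+1. \<Sum>bs\<in>{bs\<in>compositions_hd_ge 3 k. length bs = j}. mzv bs)"
    by (intro sum.group[symmetric] finite_compositions_hd_ge) auto
  also have "\<dots> = (\<Sum>j=1..k+1. ST (k + 3) j)"
  proof (intro sum.cong refl)
    fix j :: nat assume "j \<in> {1..k+1}"
    then have "{bs\<in>compositions_hd_ge 3 k. length bs = j}
        = {as. length as = j \<and> sum_list as = k + 3 \<and> (\<forall>a\<in>set as. 1 \<le> a) \<and> 3 \<le> hd as}"
      by (auto simp: compositions_hd_ge_def)
    then show "(\<Sum>bs\<in>{bs\<in>compositions_hd_ge 3 k. length bs = j}. mzv bs) = ST (k + 3) j"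
      by (simp add: ST_def)
  qed
  also have "\<dots> = ST (k + 3) 1 + (\<Sum>j=2..k+1. ST (k + 3) j)"
    by (subst sum.atLeast_Suc_atMost) (auto simp: numeral_2_eq_2)
  also have "ST (k + 3) 1 = mzv [k + 3]"
  proof -
    have "{as. length as = 1 \<and> sum_list as = k + 3 \<and> (\<forall>a\<in>set as. 1 \<le> a) \<and> 3 \<le> hd as} = {[k + 3]}"
      by (auto simp: length_Suc_conv)
    then show ?thesis by (simp add: ST_def)
  qed
  finally show ?thesis .
qed

theorem mainTheorem15:
  fixes k :: nat
  assumes "1 \<le> k"
  shows "(\<lambda>n. harm k (Suc n) / real (Suc n) ^ 3) sums (mzv [k+3] + mzv [3, k])
    \<and> (\<lambda>n. polyP k (\<lambda>i. harm i (Suc n)) / real (Suc n) ^ 3)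
           sums (mzv [k+2, 1] + mzv [k+1, 1, 1])
    \<and> (\<lambda>n. polyQ k (\<lambda>i. harm i (Suc n)) / real (Suc n) ^ 3)
           sums (mzv [k+3] + (\<Sum>j=2..k+1. ST (k+3) j))"
proof (intro conjI)
  show "(\<lambda>n. harm k (Suc n) / real (Suc n) ^ 3) sums (mzv [k+3] + mzv [3, k])"
    using harm_series[of 3 k] assms by simp
  show "(\<lambda>n. polyP k (\<lambda>i. harm i (Suc n)) / real (Suc n) ^ 3) sums (mzv [k+2, 1] + mzv [k+1, 1, 1])"
    using polyP_harm_series[OF assms, of 1] by (simp add: numeral_2_eq_2 numeral_3_eq_3)
  show "(\<lambda>n. polyQ k (\<lambda>i. harm i (Suc n)) / real (Suc n) ^ 3) sums (mzv [k+3] + (\<Sum>j=2..k+1. ST (k+3) j))"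
    using polyQ_harm_series[of 3 k] by (simp add: sum_mzv_compositions_hd_ge_3)
qed

end
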